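(* Let $N=10$ and $f(u)=e^{g(u)}$ where $g\in C^3[0,\infty)$ satisfies $g'>0$, $g''>0$, $g'^2-g''\ge0$, $2g''^2-g'g'''>0$ on $[0,\infty)$. Let $v(r)=F^{-1}\big[\frac{r^2}{16}e^{-x(t)}\big]$, $t=-\log r$, for $0<r\le R$, with $x$, $t_0$, $R$ as in the context. Then $v''+\frac{N-1}{r}v'+f(v)\ge0$ for $0<r\le R$.
   Context: Let $F(u)=\int_u^\infty\frac{ds}{f(s)}$, $\eta(y)=F^{-1}(e^{-y})$ and $h(y)=1-f'(\eta(y))F(\eta(y))$ for $y\ge-\log F(0)$. Under the hypotheses, $h(y)\to0$ as $y\to\infty$ and $h'<0$, and there exist $t_0\in\mathbb{R}$ and a $C^2$ function $x:[t_0,\infty)\to\mathbb{R}$ such that $4(e^{x(t)}-1)=h(x(t)+2t+\log16)$ for all $t\ge t_0$, $x(t_0)+2t_0+\log16=-\log F(0)$, $|x(t)|\le1$ for all large $t$, and $\xi(t):=x(t)+2t+\log16$ is strictly increasing; for each $t$ the value $x(t)$ is the unique solution of the implicit equation with $x+2t+\log 16\ge -\log F(0)$. Set $R=e^{-t_0}$; then $v=\eta(\xi(t))$ is defined on $(0,R]$ with $v(R)=0$. *)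

theory Defs
  imports "HOL-Analysis.Analysis"
begin

definition Fint :: "(real \<Rightarrow> real) \<Rightarrow> real \<Rightarrow> real" where
  "Fint g u = integral {u..} (\<lambda>s. 1 / exp (g s))"

definition eta :: "(real \<Rightarrow> real) \<Rightarrow> real \<Rightarrow> real" where
  "eta g y = inv_into {0..} (Fint g) (exp (- y))"

text \<open>h(y) = 1 - f'(eta y) F(eta y), with f' = g' exp g, g1 the derivative of g.\<close>
definition hfun :: "(real \<Rightarrow> real) \<Rightarrow> (real \<Rightarrow> real) \<Rightarrow> real \<Rightarrow> real" where
  "hfun g g1 y = 1 - g1 (eta g y) * exp (g (eta g y)) * Fint g (eta g y)"

definition vfun :: "(real \<Rightarrow> real) \<Rightarrow> (real \<Rightarrow> real) \<Rightarrow> real \<Rightarrow> real" where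
  "vfun g x r = inv_into {0..} (Fint g) (r\<^sup>2 / 16 * exp (- x (- ln r)))"

end

theory Submission
  imports Defs "HOL-Real_Asymp.Real_Asymp"
begin

text \<open>Write \<open>t = -ln r\<close>, \<open>P = f(v) F(v)\<close> and \<open>Y = 2 + x'(t)\<close>. Then \<open>v' = -P Y / r\<close>, the
  implicit equation for \<open>x\<close> reads \<open>4 (e\<^sup>x - 1) = 1 - g'(v) P\<close>, and
  \<open>v'' + 9 v' / r + f(v) = P / r\<^sup>2 (Y\<^sup>2 (g'(v) P - 1) + x'' - 8 Y + 16 e\<^sup>x)\<close>.
  Differentiating the implicit equation once and twice in \<open>r\<close> expresses \<open>Y\<close> and \<open>x''\<close> through
  \<open>p = g'(v) P\<close> and \<open>q = P ((g'' + g'\<^sup>2) P - g')\<close>. The two-sided bound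
  \<open>g' e\<^sup>-\<^sup>g / (g'' + g'\<^sup>2) \<le> F \<le> e\<^sup>-\<^sup>g / g'\<close>, proved by comparing derivatives and letting
  the argument tend to infinity, gives \<open>0 \<le> q \<le> p \<le> 1\<close>. With these and \<open>2 g''\<^sup>2 \<ge> g' g'''\<close>, the
  bracket times a positive factor is bounded below by
  \<open>4 (5 - p) q ((5 - p)(3 - 2 p) + q (10 - 3 p) + q\<^sup>2) \<ge> 0\<close>.\<close>

lemma has_real_derivative_from_left_right:
  assumes "(f has_real_derivative D) (at x within {..x})" "(f has_real_derivative D) (at x within {x..})"
  shows "(f has_real_derivative D) (at x)"
  using assms unfolding has_field_derivative_iff by (intro Lim_Un_univ[where S="{..x}" and T="{x..}"]) auto

lemma DERIV_within_nonneg_imp_increasing: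
  fixes f f' :: "real \<Rightarrow> real"
  assumes deriv: "\<And>u. c \<le> u \<Longrightarrow> (f has_real_derivative f' u) (at u within {c..})"
    and nonneg: "\<And>u. a \<le> u \<Longrightarrow> u \<le> b \<Longrightarrow> f' u \<ge> 0" and "c \<le> a" "a \<le> b"
  shows "f a \<le> f b"
proof (rule DERIV_nonneg_imp_increasing_open[OF \<open>a \<le> b\<close>])
  fix u assume u: "a < u" "u < b"
  then have "at u within {c..} = at u" using \<open>c \<le> a\<close> by (intro at_within_interior) auto
  then show "\<exists>y. (f has_real_derivative y) (at u) \<and> 0 \<le> y"
    using deriv[of u] nonneg[of u] u \<open>c \<le> a\<close> by auto
next
  have "continuous_on {c..} f" using deriv by (intro DERIV_continuous_on) auto
  then show "continuous_on {a..b} f" by (rule continuous_on_subset) (use \<open>c \<le> a\<close> in auto)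
qed

lemma DERIV_unique_on:
  assumes "\<And>s. s \<in> S \<Longrightarrow> f s = h s" "x \<in> S" "x islimpt S"
    and "(f has_real_derivative A) (at x within S)" "(h has_real_derivative B) (at x within S)"
  shows "A = B"
proof -
  have "(h has_real_derivative A) (at x within S)"
    using has_field_derivative_transform_within[OF assms(4), where d=1] assms(1,2) by auto
  then show ?thesis
    using has_field_derivative_unique assms(3,5) trivial_limit_within by blast
qed

lemma DERIV_chain_within:
  assumes "(f has_real_derivative f') (at (h x) within T)" "(h has_real_derivative h') (at x within S)"
    and "h ` S \<subseteq> T"
  shows "((\<lambda>x. f (h x)) has_real_derivative f' * h') (at x within S)"
  using DERIV_image_chain[OF DERIV_subset[OF assms(1,3)] assms(2)] by (simp add: o_def)

text \<open>With \<open>a, b, c\<close> the values of \<open>g', g'', g'''\<close> and \<open>e = e\<^sup>-\<^sup>g\<close>, the left-hand side is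
  \<open>(g' e\<^sup>-\<^sup>g / (g'' + g'\<^sup>2))' + e\<^sup>-\<^sup>g\<close>.\<close>

lemma tail_quotient_identity:
  fixes a b c e :: real
  assumes "b + a\<^sup>2 \<noteq> 0"
  shows "(b * (b + a\<^sup>2) - a * (c + 2 * (b * a))) / ((b + a\<^sup>2) * (b + a\<^sup>2)) * e + e * - a * (a / (b + a\<^sup>2)) + e
    = (2 * b\<^sup>2 - a * c) / (b + a\<^sup>2)\<^sup>2 * e"
proof -
  obtain D where D: "D = b + a\<^sup>2" "D \<noteq> 0" using assms by blast
  have "(b * D - a * (c + 2 * (b * a))) / (D * D) * e + e * - a * (a / D) + e
      = (b * D - a * (c + 2 * (b * a)) - a * a * D + D * D) / D\<^sup>2 * e"
    using D(2) by (simp add: field_simps power2_eq_square)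
  also have "b * D - a * (c + 2 * (b * a)) - a * a * D + D * D = 2 * b\<^sup>2 - a * c"
    unfolding D(1) by (simp add: algebra_simps power2_eq_square)
  finally show ?thesis unfolding D(1) .
qed

locale Fint_profile =
  fixes g g1 g2 :: "real \<Rightarrow> real"
  assumes has_deriv_g: "\<And>u. u \<ge> 0 \<Longrightarrow> (g has_real_derivative g1 u) (at u within {0..})"
    and has_deriv_g1: "\<And>u. u \<ge> 0 \<Longrightarrow> (g1 has_real_derivative g2 u) (at u within {0..})"
    and g1_pos: "\<And>u. u \<ge> 0 \<Longrightarrow> g1 u > 0"
    and g2_nonneg: "\<And>u. u \<ge> 0 \<Longrightarrow> g2 u \<ge> 0"
begin

lemma g1_mono: "0 \<le> u \<Longrightarrow> u \<le> s \<Longrightarrow> g1 u \<le> g1 s"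
  by (rule DERIV_within_nonneg_imp_increasing[OF has_deriv_g1 g2_nonneg]) auto

lemma g_above_tangent:
  assumes "0 \<le> u" "u \<le> s"
  shows "g u + g1 u * (s - u) \<le> g s"
proof -
  have "g u - g1 u * u \<le> g s - g1 u * s"
  proof (rule DERIV_within_nonneg_imp_increasing[where f="\<lambda>s. g s - g1 u * s"])
    fix w :: real assume "0 \<le> w"
    show "((\<lambda>s. g s - g1 u * s) has_real_derivative g1 w - g1 u) (at w within {0..})"
      using has_deriv_g[OF \<open>0 \<le> w\<close>] by (auto intro!: derivative_eq_intros)
  qed (use assms g1_mono in auto)
  then show ?thesis by (simp add: algebra_simps)
qed

lemma continuous_on_g: "continuous_on {0..} g"
  using has_deriv_g by (intro DERIV_continuous_on) auto

lemma exp_neg_g_le_tangent: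
  assumes "0 \<le> u" "u \<le> s"
  shows "1 / exp (g s) \<le> exp (g1 u * u - g u) * exp (- g1 u * s)"
proof -
  have "exp (- g s) \<le> exp (g1 u * u - g u) * exp (- g1 u * s)"
    unfolding mult_exp_exp using g_above_tangent[OF assms] by (simp add: algebra_simps)
  then show ?thesis by (simp add: exp_minus inverse_eq_divide)
qed

lemma
  assumes "u \<ge> 0"
  shows integrable_Fint: "(\<lambda>s. 1 / exp (g s)) integrable_on {u..}"
    and Fint_le: "Fint g u \<le> exp (- g u) / g1 u"
proof -
  define C where "C = exp (g1 u * u - g u)"
  have bound: "((\<lambda>s. C * exp (- g1 u * s)) has_integral C * (exp (- g1 u * u) / g1 u)) {u..}"
    using has_integral_exp_minus_to_infinity[OF g1_pos[OF assms]] by (rule has_integral_mult_right)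
  have le: "1 / exp (g s) \<le> C * exp (- g1 u * s)" if "s \<in> {u..}" for s
    using exp_neg_g_le_tangent[of u s] that assms by (simp add: C_def)
  show int: "(\<lambda>s. 1 / exp (g s)) integrable_on {u..}"
  proof (rule integrable_on_all_intervals_integrable_bound[OF _ _ has_integral_integrable[OF bound]])
    fix a b :: real
    have "continuous_on {max u a..b} (\<lambda>s. 1 / exp (g s))"
      using assms by (intro continuous_intros continuous_on_subset[OF continuous_on_g]) auto
    then have "(\<lambda>s. 1 / exp (g s)) integrable_on ({u..} \<inter> cbox a b)"
      by (simp add: integrable_continuous_interval)
    then show "(\<lambda>s. if s \<in> {u..} then 1 / exp (g s) else 0) integrable_on cbox a b"
      by (subst integrable_restrict_Int) simp
  qed (use le in auto)
  have "Fint g u \<le> C * (exp (- g1 u * u) / g1 u)"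
    unfolding Fint_def using int bound le by (rule has_integral_le[OF integrable_integral])
  also have "\<dots> = exp (- g u) / g1 u"
    by (simp add: C_def exp_add[symmetric])
  finally show "Fint g u \<le> exp (- g u) / g1 u" .
qed

lemma Fint_nonneg: "u \<ge> 0 \<Longrightarrow> Fint g u \<ge> 0"
  unfolding Fint_def by (rule integral_nonneg[OF integrable_Fint]) auto

lemma tendsto_Fint_bound: "((\<lambda>u. exp (- g u) / g1 u) \<longlongrightarrow> 0) at_top"
proof (rule tendsto_sandwich)
  show "\<forall>\<^sub>F u in at_top. exp (- g u) / g1 u \<le> exp (- (g 0 + g1 0 * u)) / g1 0"
    using eventually_ge_at_top[of 0]
  proof eventually_elim
    case (elim u)
    then show ?case
      using g_above_tangent[of 0 u] g1_mono[of 0 u] g1_pos[of 0] by (intro frac_le) auto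
  qed
  show "\<forall>\<^sub>F u in at_top. 0 \<le> exp (- g u) / g1 u"
    using eventually_ge_at_top[of 0] by eventually_elim (simp add: less_imp_le[OF g1_pos])
  have "g1 0 > 0" by (rule g1_pos) simp
  then show "((\<lambda>u. exp (- (g 0 + g1 0 * u)) / g1 0) \<longlongrightarrow> 0) at_top"
    by real_asymp
qed simp

lemma Fint_tendsto_zero: "(Fint g \<longlongrightarrow> 0) at_top"
proof (rule tendsto_sandwich[OF _ _ tendsto_const tendsto_Fint_bound])
  show "\<forall>\<^sub>F u in at_top. 0 \<le> Fint g u"
    using eventually_ge_at_top[of 0] by eventually_elim (rule Fint_nonneg)
  show "\<forall>\<^sub>F u in at_top. Fint g u \<le> exp (- g u) / g1 u"
    using eventually_ge_at_top[of 0] by eventually_elim (rule Fint_le)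
qed

lemma Fint_split:
  assumes "w \<ge> 0"
  shows "Fint g 0 = integral {0..w} (\<lambda>s. 1 / exp (g s)) + Fint g w"
proof -
  have "continuous_on {0..w} (\<lambda>s. 1 / exp (g s))"
    by (intro continuous_intros continuous_on_subset[OF continuous_on_g]) auto
  then have "((\<lambda>s. 1 / exp (g s)) has_integral integral {0..w} (\<lambda>s. 1 / exp (g s))) {0..w}"
    by (intro integrable_integral integrable_continuous_interval)
  moreover have "((\<lambda>s. 1 / exp (g s)) has_integral Fint g w) {w..}"
    unfolding Fint_def using integrable_Fint[OF assms] by (rule integrable_integral)
  moreover have "negligible ({0..w} \<inter> {w..})" "{0..w} \<union> {w..} = {0..}"
    using assms by auto
  ultimately have "((\<lambda>s. 1 / exp (g s)) has_integral integral {0..w} (\<lambda>s. 1 / exp (g s)) + Fint g w) {0..}"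
    using has_integral_Un by metis
  then show ?thesis unfolding Fint_def[of g 0] by (rule integral_unique)
qed

lemma has_real_derivative_Fint:
  assumes "u \<ge> 0"
  shows "(Fint g has_real_derivative - (1 / exp (g u))) (at u within {0..})"
proof -
  define I where "I w = integral {0..w} (\<lambda>s. 1 / exp (g s))" for w
  have "(I has_real_derivative 1 / exp (g u)) (at u within {0..u + 1})"
    unfolding I_def using assms
    by (intro integral_has_real_derivative continuous_intros continuous_on_subset[OF continuous_on_g]) auto
  moreover have "at u within {0..u + 1} = at u within {0..}"
    by (rule at_within_nhd[where S="{..<u + 1}"]) auto
  ultimately have "((\<lambda>w. Fint g 0 - I w) has_real_derivative - (1 / exp (g u))) (at u within {0..})"
    by (auto intro!: derivative_eq_intros)
  then show ?thesis
    by (rule has_field_derivative_transform_within[where d=1]) (use assms Fint_split in \<open>auto simp: I_def\<close>)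
qed

lemma Fint_ge:
  fixes g3 :: "real \<Rightarrow> real"
  assumes has_deriv_g2: "\<And>u. u \<ge> 0 \<Longrightarrow> (g2 has_real_derivative g3 u) (at u within {0..})"
    and g1_g3_le: "\<And>u. u \<ge> 0 \<Longrightarrow> g1 u * g3 u \<le> 2 * (g2 u)\<^sup>2"
    and "u \<ge> 0"
  shows "g1 u / (g2 u + (g1 u)\<^sup>2) * exp (- g u) \<le> Fint g u"
proof -
  define \<phi> where "\<phi> s = g1 s / (g2 s + (g1 s)\<^sup>2) * exp (- g s)" for s
  have D_pos: "g2 s + (g1 s)\<^sup>2 > 0" if "s \<ge> 0" for s
    using g1_pos[OF that] g2_nonneg[OF that] by (simp add: add_nonneg_pos)
  have deriv: "((\<lambda>s. \<phi> s - Fint g s) has_real_derivative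
      (2 * (g2 s)\<^sup>2 - g1 s * g3 s) / (g2 s + (g1 s)\<^sup>2)\<^sup>2 * exp (- g s)) (at s within {0..})"
    if s: "s \<ge> 0" for s
    unfolding \<phi>_def
    apply (rule derivative_eq_intros has_deriv_g[OF s] has_deriv_g1[OF s] has_deriv_g2[OF s]
        has_real_derivative_Fint[OF s] refl | (use D_pos[OF s] in simp; fail))+
    using tail_quotient_identity[of "g2 s" "g1 s" "g3 s" "exp (- g s)"] D_pos[OF s]
    by (simp add: exp_minus inverse_eq_divide)
  have "\<forall>\<^sub>F U in at_top. \<phi> u - Fint g u \<le> exp (- g U) / g1 U"
    using eventually_ge_at_top[of u]
  proof eventually_elim
    case (elim U)
    then have U: "U \<ge> 0" using \<open>u \<ge> 0\<close> by linarith
    have "\<phi> u - Fint g u \<le> \<phi> U - Fint g U"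
      by (rule DERIV_within_nonneg_imp_increasing[OF deriv]) (use \<open>u \<ge> 0\<close> elim g1_g3_le in auto)
    also have "\<dots> \<le> \<phi> U" using Fint_nonneg[OF U] by simp
    also have "\<dots> \<le> exp (- g U) / g1 U"
    proof -
      have "g1 U / (g2 U + (g1 U)\<^sup>2) \<le> 1 / g1 U"
        using g1_pos[OF U] g2_nonneg[OF U] D_pos[OF U] by (simp add: field_simps power2_eq_square)
      then show ?thesis unfolding \<phi>_def by (simp add: mult_right_mono divide_inverse)
    qed
    finally show ?case .
  qed
  then have "\<phi> u - Fint g u \<le> 0"
    by (rule tendsto_lowerbound[OF tendsto_Fint_bound]) simp
  then show ?thesis by (simp add: \<phi>_def)
qed

text \<open>The extension of \<open>F\<close> by its tangent line at \<open>0\<close> is a strictly decreasing bijection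
  \<open>\<real> \<rightarrow> (0, \<infinity>)\<close> that is differentiable everywhere, so the inverse function theorem applies
  to it also at the endpoint \<open>F 0\<close>.\<close>

definition Fint_ext :: "real \<Rightarrow> real" where
  "Fint_ext u = (if u \<ge> 0 then Fint g u else Fint g 0 - u / exp (g 0))"

lemma has_real_derivative_Fint_ext:
  "(Fint_ext has_real_derivative - (1 / exp (g (max u 0)))) (at u)"
proof -
  have tangent: "((\<lambda>w. Fint g 0 - w / exp (g 0)) has_real_derivative - (1 / exp (g 0))) (at w within A)"
    for w A by (auto intro!: derivative_eq_intros)
  consider "u < 0" | "u > 0" | "u = 0" by linarith
  then show ?thesis
  proof cases
    case 1
    have "\<forall>\<^sub>F w in nhds u. Fint_ext w = Fint g 0 - w / exp (g 0)"
      using eventually_nhds_in_open[of "{..<0}" u] 1 by (auto elim!: eventually_mono simp: Fint_ext_def)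
    then show ?thesis using 1 tangent by (subst DERIV_cong_ev[OF refl _ refl]) auto
  next
    case 2
    have "\<forall>\<^sub>F w in nhds u. Fint_ext w = Fint g w"
      using eventually_nhds_in_open[of "{0<..}" u] 2 by (auto elim!: eventually_mono simp: Fint_ext_def)
    moreover have "at u within {0..} = at u" using 2 by (intro at_within_interior) auto
    ultimately show ?thesis
      using 2 has_real_derivative_Fint[of u] by (subst DERIV_cong_ev[OF refl _ refl]) auto
  next
    case 3
    show ?thesis unfolding 3 max.idem
    proof (rule has_real_derivative_from_left_right)
      show "(Fint_ext has_real_derivative - (1 / exp (g 0))) (at 0 within {..0})"
        by (rule has_field_derivative_transform_within[OF tangent, where d=1]) (auto simp: Fint_ext_def)
      show "(Fint_ext has_real_derivative - (1 / exp (g 0))) (at 0 within {0..})"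
        by (rule has_field_derivative_transform_within[OF has_real_derivative_Fint, where d=1])
          (auto simp: Fint_ext_def)
    qed
  qed
qed

lemma isCont_Fint_ext: "isCont Fint_ext u"
  by (rule DERIV_isCont[OF has_real_derivative_Fint_ext])

lemma Fint_ext_strict_antimono: "a < b \<Longrightarrow> Fint_ext b < Fint_ext a"
proof (rule DERIV_neg_imp_decreasing[where f=Fint_ext])
  show "\<exists>y. (Fint_ext has_real_derivative y) (at x) \<and> y < 0" for x
    using has_real_derivative_Fint_ext[of x] by (intro exI[of _ "- (1 / exp (g (max x 0)))"]) simp
qed

lemma inj_Fint_ext: "inj Fint_ext"
  by (rule linorder_injI) (metis Fint_ext_strict_antimono order_less_irrefl)

lemma Fint_0_pos: "Fint g 0 > 0"
  using Fint_ext_strict_antimono[of 0 1] Fint_nonneg[of 1] by (simp add: Fint_ext_def)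

lemma Fint_ext_surj:
  assumes "y > 0"
  shows "\<exists>u. Fint_ext u = y"
proof (cases "y \<ge> Fint g 0")
  case True
  define u where "u = (Fint g 0 - y) * exp (g 0)"
  have "u \<le> 0" using True by (simp add: u_def mult_nonpos_nonneg)
  then have "Fint_ext u = y" by (cases "u = 0") (auto simp: Fint_ext_def u_def)
  then show ?thesis by blast
next
  case False
  have "\<forall>\<^sub>F U in at_top. Fint g U < y \<and> U \<ge> 0"
    using order_tendstoD(2)[OF Fint_tendsto_zero assms] eventually_ge_at_top[of 0]
    by (rule eventually_conj)
  then obtain U where U: "Fint g U < y" "U \<ge> 0" by (auto simp: eventually_at_top_linorder)
  moreover have "Fint_ext U < y" "y \<le> Fint_ext 0"
    using U False by (simp_all add: Fint_ext_def)
  ultimately show ?thesis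
    using IVT2[of Fint_ext U y 0] isCont_Fint_ext by auto
qed

definition Fint_inv :: "real \<Rightarrow> real" where
  "Fint_inv = inv Fint_ext"

lemma Fint_ext_Fint_inv: "y > 0 \<Longrightarrow> Fint_ext (Fint_inv y) = y"
  unfolding Fint_inv_def using Fint_ext_surj by (metis f_inv_into_f rangeI)

lemma has_real_derivative_Fint_inv:
  assumes "y > 0"
  shows "(Fint_inv has_real_derivative - exp (g (max (Fint_inv y) 0))) (at y)"
proof -
  have "isCont Fint_inv (Fint_ext (Fint_inv y))"
    by (rule isCont_inverse_function[where d=1])
      (auto simp: Fint_inv_def inj_Fint_ext isCont_Fint_ext)
  then have "isCont Fint_inv y" using Fint_ext_Fint_inv[OF assms] by simp
  then have "(Fint_inv has_real_derivative inverse (- (1 / exp (g (max (Fint_inv y) 0))))) (at y)"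
    by (intro DERIV_inverse_function[where a=0 and b="y + 1", OF has_real_derivative_Fint_ext])
      (use assms Fint_ext_Fint_inv in auto)
  then show ?thesis by (simp add: inverse_eq_divide)
qed

lemma
  assumes "0 < y" "y \<le> Fint g 0"
  shows Fint_inv_nonneg: "Fint_inv y \<ge> 0"
    and Fint_Fint_inv: "Fint g (Fint_inv y) = y"
    and inv_into_Fint_eq: "inv_into {0..} (Fint g) y = Fint_inv y"
proof -
  show nonneg: "Fint_inv y \<ge> 0"
  proof (rule ccontr)
    assume "\<not> Fint_inv y \<ge> 0"
    then have "Fint_ext (Fint_inv y) > Fint g 0" by (simp add: Fint_ext_def field_simps)
    then show False using Fint_ext_Fint_inv assms by simp
  qed
  show F: "Fint g (Fint_inv y) = y"
    using Fint_ext_Fint_inv[OF assms(1)] nonneg by (simp add: Fint_ext_def)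
  have "inj_on (Fint g) {0..}"
  proof (rule inj_onI)
    fix a b assume "a \<in> {0..}" "b \<in> {0..}" "Fint g a = Fint g b"
    then have "Fint_ext a = Fint_ext b" by (simp add: Fint_ext_def)
    then show "a = b" using inj_Fint_ext by (simp add: inj_eq)
  qed
  then show "inv_into {0..} (Fint g) y = Fint_inv y"
    using F nonneg by (metis atLeast_iff inv_into_f_f)
qed

end

lemma supersolution_polynomial_nonneg:
  fixes p q y z B :: real
  assumes "p \<le> 1" "q \<ge> 0" "B \<ge> - 3 * q"
    and y: "y * (5 - p + q) = 2 * (5 - p)"
    and z: "z * (5 - p + q) = y\<^sup>2 * B - (5 - p) * (y - 2)\<^sup>2"
  shows "y\<^sup>2 * (p - 1) + z - 8 * y + 4 * (5 - p) \<ge> 0"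
proof -
  define H where "H = 5 - p"
  define Z where "Z = H + q"
  have H: "H > 0" and Z: "Z > 0" using assms by (auto simp: H_def Z_def)
  define L where "L = y\<^sup>2 * (p - 1) * Z - 3 * q * y\<^sup>2 - H * (y - 2)\<^sup>2 - 8 * y * Z + 4 * H * Z"
  have "L * Z\<^sup>2 = 4 * H * q * (H * (3 - 2 * p) + q * (10 - 3 * p) + q\<^sup>2)"
  proof -
    have yZ: "y * Z = 2 * H" using y by (simp add: H_def Z_def)
    have "L * Z\<^sup>2 = (y * Z)\<^sup>2 * ((p - 1) * Z - 3 * q - H) + 4 * H * (y * Z) * Z - 4 * H * Z\<^sup>2
        - 8 * (y * Z) * Z\<^sup>2 + 4 * H * Z ^ 3"
      by (simp add: L_def algebra_simps power2_eq_square power3_eq_cube)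
    also have "\<dots> = 4 * H * q * (H * (3 - 2 * p) + q * (10 - 3 * p) + q\<^sup>2)"
      unfolding yZ by (simp add: H_def Z_def algebra_simps power2_eq_square power3_eq_cube)
    finally show ?thesis .
  qed
  also have "\<dots> \<ge> 0" using assms H by (simp add: H_def)
  finally have "L \<ge> 0" using Z by (simp add: zero_le_mult_iff)
  moreover have "(y\<^sup>2 * (p - 1) + z - 8 * y + 4 * (5 - p)) * Z = L + y\<^sup>2 * (B + 3 * q)"
    using z by (simp add: L_def H_def Z_def algebra_simps)
  moreover have "y\<^sup>2 * (B + 3 * q) \<ge> 0" using assms by simp
  ultimately have "(y\<^sup>2 * (p - 1) + z - 8 * y + 4 * (5 - p)) * Z \<ge> 0" by linarith
  then show ?thesis using Z by (simp add: zero_le_mult_iff)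
qed

lemma second_order_coefficient_ge:
  fixes a b c P :: real
  assumes "a > 0" "P > 0" "b \<le> a\<^sup>2" "a * c \<le> 2 * b\<^sup>2" "a * P \<le> 1" "a \<le> (b + a\<^sup>2) * P"
  defines "Q \<equiv> (b + a\<^sup>2) * P - a"
  shows "P * (1 - a * P) * Q + P * (- (c + 2 * a * b) * P\<^sup>2 + (b + a\<^sup>2) * P * (1 - a * P) + b * P)
    \<ge> - 3 * (P * Q)"
proof -
  define p where "p = a * P"
  define q where "q = P * Q"
  have p: "0 < p" "p \<le> 1" using assms by (simp_all add: p_def)
  have q: "q \<ge> 0" using assms by (simp add: q_def Q_def)
  have "b * P\<^sup>2 \<le> p\<^sup>2"
    using assms mult_right_mono[of b "a\<^sup>2" "P\<^sup>2"] by (simp add: p_def power_mult_distrib)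
  moreover have "p\<^sup>2 \<le> p" using p by (simp add: power2_eq_square mult_le_cancel_left1)
  moreover have "q = b * P\<^sup>2 + p\<^sup>2 - p"
    by (simp add: q_def Q_def p_def power2_eq_square algebra_simps)
  ultimately have "q \<le> p" by linarith
  then have "q\<^sup>2 / p \<le> q" using p q by (simp add: power2_eq_square field_simps mult_right_mono)
  have "(2 * b\<^sup>2 / a - c) * P ^ 3 \<ge> 0" using assms by (simp add: field_simps)
  moreover have "P * (1 - a * P) * Q + P * (- (c + 2 * a * b) * P\<^sup>2 + (b + a\<^sup>2) * P * (1 - a * P) + b * P)
      = P * (1 - a * P) * Q + P * (- (2 * b\<^sup>2 / a + 2 * a * b) * P\<^sup>2 + (b + a\<^sup>2) * P * (1 - a * P) + b * P)
        + (2 * b\<^sup>2 / a - c) * P ^ 3"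
    by (simp add: algebra_simps power2_eq_square power3_eq_cube)
  moreover have "P * (1 - a * P) * Q + P * (- (2 * b\<^sup>2 / a + 2 * a * b) * P\<^sup>2 + (b + a\<^sup>2) * P * (1 - a * P) + b * P)
      = - q - 2 * (q\<^sup>2 / p)"
    using assms by (simp add: p_def q_def Q_def field_simps power2_eq_square power3_eq_cube)
  ultimately show ?thesis
    using \<open>q\<^sup>2 / p \<le> q\<close> unfolding q_def by linarith
qed

lemma supersolution_algebra:
  fixes a b c P X y z :: real
  assumes "a > 0" "P > 0" "b \<le> a\<^sup>2" "a * c \<le> 2 * b\<^sup>2" "a * P \<le> 1" "a \<le> (b + a\<^sup>2) * P"
    and rel0: "4 * (X - 1) = 1 - a * P"
    and rel1: "4 * X * (y - 2) = - (P * y * ((b + a\<^sup>2) * P - a))"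
    and rel2: "4 * X * (y - 2)\<^sup>2 + 4 * X * z = P * y\<^sup>2 * (1 - a * P) * ((b + a\<^sup>2) * P - a)
      - P * z * ((b + a\<^sup>2) * P - a)
      + P * y\<^sup>2 * (- (c + 2 * a * b) * P\<^sup>2 + (b + a\<^sup>2) * P * (1 - a * P) + b * P)"
  shows "y\<^sup>2 * (a * P - 1) + z - 8 * y + 16 * X \<ge> 0"
proof -
  define Q where "Q = (b + a\<^sup>2) * P - a"
  define B where "B = P * (1 - a * P) * Q + P * (- (c + 2 * a * b) * P\<^sup>2 + (b + a\<^sup>2) * P * (1 - a * P) + b * P)"
  have X: "4 * X = 5 - a * P" using rel0 by simp
  have "y\<^sup>2 * (a * P - 1) + z - 8 * y + 4 * (5 - a * P) \<ge> 0"
  proof (rule supersolution_polynomial_nonneg)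
    show "a * P \<le> 1" "P * Q \<ge> 0" using assms by (simp_all add: Q_def)
    show "B \<ge> - 3 * (P * Q)" using second_order_coefficient_ge[OF assms(1-6)] by (simp add: B_def Q_def)
    show "y * (5 - a * P + P * Q) = 2 * (5 - a * P)"
      unfolding X[symmetric] using rel1 by (simp add: Q_def algebra_simps)
    show "z * (5 - a * P + P * Q) = y\<^sup>2 * B - (5 - a * P) * (y - 2)\<^sup>2"
      unfolding X[symmetric] using rel2 by (simp add: B_def Q_def algebra_simps)
  qed
  then show ?thesis using X by simp
qed

locale radial_profile = Fint_profile g g1 g2
  for g g1 g2 :: "real \<Rightarrow> real" +
  fixes g3 x x1 x2 :: "real \<Rightarrow> real" and t0 :: real
  assumes has_deriv_g2: "\<And>u. u \<ge> 0 \<Longrightarrow> (g2 has_real_derivative g3 u) (at u within {0..})"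
    and g2_le_sq_g1: "\<And>u. u \<ge> 0 \<Longrightarrow> g2 u \<le> (g1 u)\<^sup>2"
    and g1_g3_le: "\<And>u. u \<ge> 0 \<Longrightarrow> g1 u * g3 u \<le> 2 * (g2 u)\<^sup>2"
    and has_deriv_x: "\<And>t. t \<ge> t0 \<Longrightarrow> (x has_real_derivative x1 t) (at t within {t0..})"
    and has_deriv_x1: "\<And>t. t \<ge> t0 \<Longrightarrow> (x1 has_real_derivative x2 t) (at t within {t0..})"
    and x_eq: "\<And>t. t \<ge> t0 \<Longrightarrow> 4 * (exp (x t) - 1) = hfun g g1 (x t + 2 * t + ln 16)"
    and x_dom: "\<And>t. t \<ge> t0 \<Longrightarrow> x t + 2 * t + ln 16 \<ge> - ln (Fint g 0)"
begin

abbreviation R :: real where "R \<equiv> exp (- t0)"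

abbreviation v :: "real \<Rightarrow> real" where "v \<equiv> vfun g x"

text \<open>In the notation of the paper, with \<open>t = -ln r\<close>: \<open>Fv r = F(v(r))\<close>, \<open>P = f(v) F(v)\<close>,
  \<open>Y = 2 + x'(t)\<close>, and \<open>v1\<close>, \<open>v2\<close> are \<open>v'\<close>, \<open>v''\<close>.\<close>

definition Fv :: "real \<Rightarrow> real" where
  "Fv r = r\<^sup>2 / 16 * exp (- x (- ln r))"

definition P :: "real \<Rightarrow> real" where
  "P r = exp (g (v r)) * Fv r"

definition Y :: "real \<Rightarrow> real" where
  "Y r = 2 + x1 (- ln r)"

definition v1 :: "real \<Rightarrow> real" where
  "v1 r = - (P r * Y r) / r"

definition v2 :: "real \<Rightarrow> real" where
  "v2 r = P r / r\<^sup>2 * ((Y r)\<^sup>2 * (g1 (v r) * P r - 1) + x2 (- ln r) + Y r)"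

lemma minus_ln_ge: "r \<in> {0<..R} \<Longrightarrow> t0 \<le> - ln r"
  using ln_le_cancel_iff[of r R] by auto

lemma Fv_pos: "r > 0 \<Longrightarrow> Fv r > 0"
  by (simp add: Fv_def)

lemma Fv_eq_exp:
  assumes "r > 0"
  shows "Fv r = exp (- (x (- ln r) + 2 * (- ln r) + ln 16))"
proof -
  have "- (x (- ln r) + 2 * (- ln r) + ln 16) = - x (- ln r) + ln r + ln r - ln 16" by simp
  then have "exp (- (x (- ln r) + 2 * (- ln r) + ln 16))
      = exp (- x (- ln r)) * exp (ln r) * exp (ln r) / exp (ln 16)"
    by (simp only: exp_add exp_diff)
  then show ?thesis using assms by (simp add: Fv_def power2_eq_square)
qed

lemma Fv_le:
  assumes "r \<in> {0<..R}"
  shows "Fv r \<le> Fint g 0"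
proof -
  have "- (x (- ln r) + 2 * (- ln r) + ln 16) \<le> ln (Fint g 0)"
    using x_dom[OF minus_ln_ge[OF assms]] by linarith
  then show ?thesis
    using assms Fint_0_pos by (metis Fv_eq_exp exp_le_cancel_iff exp_ln greaterThanAtMost_iff)
qed

lemma
  assumes "r \<in> {0<..R}"
  shows v_eq: "v r = Fint_inv (Fv r)"
    and v_nonneg: "v r \<ge> 0"
    and Fint_v: "Fint g (v r) = Fv r"
proof -
  have "v r = inv_into {0..} (Fint g) (Fv r)" by (simp add: vfun_def Fv_def)
  then show "v r = Fint_inv (Fv r)" "v r \<ge> 0" "Fint g (v r) = Fv r"
    using inv_into_Fint_eq Fint_inv_nonneg Fint_Fint_inv Fv_pos Fv_le assms by auto
qed

lemma implicit_relation:
  assumes "r \<in> {0<..R}"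
  shows "4 * (exp (x (- ln r)) - 1) = 1 - g1 (v r) * P r"
proof -
  have "r > 0" using assms by simp
  then have "eta g (x (- ln r) + 2 * (- ln r) + ln 16) = v r"
    unfolding eta_def Fv_eq_exp[OF \<open>r > 0\<close>, symmetric] by (simp add: vfun_def Fv_def)
  then show ?thesis
    using x_eq[OF minus_ln_ge[OF assms]] Fint_v[OF assms] by (simp add: hfun_def P_def)
qed

lemma has_real_derivative_comp_minus_ln:
  assumes "\<And>t. t \<ge> t0 \<Longrightarrow> (h has_real_derivative h' t) (at t within {t0..})"
    and r: "r \<in> {0<..R}"
  shows "((\<lambda>r. h (- ln r)) has_real_derivative - h' (- ln r) / r) (at r within {0<..R})"
proof -
  have "((\<lambda>r. - ln r) has_real_derivative - (1 / r)) (at r within {0<..R})"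
    using r by (auto intro!: derivative_eq_intros)
  moreover have "(\<lambda>r. - ln r) ` {0<..R} \<subseteq> {t0..}" using minus_ln_ge by auto
  ultimately have "((\<lambda>r. h (- ln r)) has_real_derivative h' (- ln r) * - (1 / r)) (at r within {0<..R})"
    by (rule DERIV_chain_within[where h="\<lambda>r. - ln r" and x=r, OF assms(1)[OF minus_ln_ge[OF r]]])
  then show ?thesis by simp
qed

lemma has_real_derivative_Fv:
  assumes r: "r \<in> {0<..R}"
  shows "(Fv has_real_derivative Fv r * Y r / r) (at r within {0<..R})"
  unfolding Fv_def[abs_def]
  apply (rule derivative_eq_intros has_real_derivative_comp_minus_ln[OF has_deriv_x r] refl
      | (use r in simp; fail))+
  using r by (simp add: Fv_def Y_def field_simps power2_eq_square)

lemma has_real_derivative_Y: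
  "r \<in> {0<..R} \<Longrightarrow> (Y has_real_derivative - x2 (- ln r) / r) (at r within {0<..R})"
  unfolding Y_def[abs_def]
  by (rule derivative_eq_intros has_real_derivative_comp_minus_ln[OF has_deriv_x1] refl | simp)+

lemma has_real_derivative_v:
  assumes r: "r \<in> {0<..R}"
  shows "(v has_real_derivative v1 r) (at r within {0<..R})"
proof -
  have "((\<lambda>r. Fint_inv (Fv r)) has_real_derivative
      - exp (g (max (Fint_inv (Fv r)) 0)) * (Fv r * Y r / r)) (at r within {0<..R})"
    using r by (intro DERIV_chain2[OF has_real_derivative_Fint_inv[OF Fv_pos] has_real_derivative_Fv]) simp_all
  moreover have "- exp (g (max (Fint_inv (Fv r)) 0)) * (Fv r * Y r / r) = v1 r"
    using v_eq[OF r] v_nonneg[OF r] by (simp add: v1_def P_def)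
  ultimately have "((\<lambda>r. Fint_inv (Fv r)) has_real_derivative v1 r) (at r within {0<..R})"
    by simp
  then show ?thesis
    by (rule has_field_derivative_transform_within[where d=1]) (use r in \<open>simp_all add: v_eq\<close>)
qed

lemma has_real_derivative_comp_v:
  assumes "\<And>u. u \<ge> 0 \<Longrightarrow> (h has_real_derivative h' u) (at u within {0..})"
    and r: "r \<in> {0<..R}"
  shows "((\<lambda>r. h (v r)) has_real_derivative h' (v r) * v1 r) (at r within {0<..R})"
  using DERIV_chain_within[OF assms(1)[OF v_nonneg[OF r]] has_real_derivative_v[OF r]] v_nonneg
  by force

lemma has_real_derivative_P:
  assumes r: "r \<in> {0<..R}"
  shows "(P has_real_derivative P r * Y r / r * (1 - g1 (v r) * P r)) (at r within {0<..R})"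
  unfolding P_def[abs_def]
  apply (rule derivative_eq_intros has_real_derivative_comp_v[OF has_deriv_g r]
      has_real_derivative_Fv[OF r] refl | (use r in simp; fail))+
  using r by (simp add: v1_def P_def field_simps)

lemma has_real_derivative_v1:
  assumes r: "r \<in> {0<..R}"
  shows "(v1 has_real_derivative v2 r) (at r within {0<..R})"
  unfolding v1_def[abs_def]
  apply (rule derivative_eq_intros has_real_derivative_P[OF r] has_real_derivative_Y[OF r] refl
      | (use r in simp; fail))+
  using r by (simp add: v2_def field_simps power2_eq_square)

lemma first_order_relation:
  assumes r: "r \<in> {0<..R}"
  shows "4 * exp (x (- ln r)) * (Y r - 2) = - (P r * Y r * ((g2 (v r) + (g1 (v r))\<^sup>2) * P r - g1 (v r)))"
proof -
  have "4 * (exp (x (- ln r)) * (- x1 (- ln r) / r))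
      = - (g2 (v r) * v1 r * P r + g1 (v r) * (P r * Y r / r * (1 - g1 (v r) * P r)))"
  proof (rule DERIV_unique_on[where f="\<lambda>r. 4 * (exp (x (- ln r)) - 1)" and h="\<lambda>r. 1 - g1 (v r) * P r"])
    show "((\<lambda>r. 4 * (exp (x (- ln r)) - 1)) has_real_derivative 4 * (exp (x (- ln r)) * (- x1 (- ln r) / r)))
        (at r within {0<..R})"
      by (auto intro!: derivative_eq_intros has_real_derivative_comp_minus_ln[OF has_deriv_x r])
    show "((\<lambda>r. 1 - g1 (v r) * P r) has_real_derivative
        - (g2 (v r) * v1 r * P r + g1 (v r) * (P r * Y r / r * (1 - g1 (v r) * P r)))) (at r within {0<..R})"
      by (auto intro!: derivative_eq_intros has_real_derivative_comp_v[OF has_deriv_g1 r]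
          has_real_derivative_P[OF r])
  qed (use r implicit_relation in auto)
  moreover have "r * inverse r = 1" using r by simp
  ultimately show ?thesis unfolding v1_def Y_def divide_inverse by algebra
qed

lemma second_order_relation:
  assumes r: "r \<in> {0<..R}"
  defines "Q \<equiv> (g2 (v r) + (g1 (v r))\<^sup>2) * P r - g1 (v r)"
  shows "4 * exp (x (- ln r)) * (Y r - 2)\<^sup>2 + 4 * exp (x (- ln r)) * x2 (- ln r)
    = P r * (Y r)\<^sup>2 * (1 - g1 (v r) * P r) * Q - P r * x2 (- ln r) * Q
      + P r * (Y r)\<^sup>2 * (- (g3 (v r) + 2 * g1 (v r) * g2 (v r)) * (P r)\<^sup>2
        + (g2 (v r) + (g1 (v r))\<^sup>2) * P r * (1 - g1 (v r) * P r) + g2 (v r) * P r)"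
proof -
  let ?a = "g1 (v r)" and ?b = "g2 (v r)" and ?c = "g3 (v r)" and ?X = "exp (x (- ln r))"
  have "4 * (?X * (- x1 (- ln r) / r) * (Y r - 2) + ?X * (- x2 (- ln r) / r))
      = - ((P r * Y r / r * (1 - ?a * P r) * Y r + P r * (- x2 (- ln r) / r)) * Q
        + P r * Y r * ((?c * v1 r + 2 * ?a * (?b * v1 r)) * P r
          + (?b + ?a\<^sup>2) * (P r * Y r / r * (1 - ?a * P r)) - ?b * v1 r))"
  proof (rule DERIV_unique_on[where f="\<lambda>r. 4 * exp (x (- ln r)) * (Y r - 2)"
        and h="\<lambda>r. - (P r * Y r * ((g2 (v r) + (g1 (v r))\<^sup>2) * P r - g1 (v r)))"])
    show "((\<lambda>r. 4 * exp (x (- ln r)) * (Y r - 2)) has_real_derivative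
        4 * (?X * (- x1 (- ln r) / r) * (Y r - 2) + ?X * (- x2 (- ln r) / r))) (at r within {0<..R})"
      using r by (auto intro!: derivative_eq_intros has_real_derivative_comp_minus_ln[OF has_deriv_x r]
          has_real_derivative_Y[OF r] simp: field_simps)
    show "((\<lambda>r. - (P r * Y r * ((g2 (v r) + (g1 (v r))\<^sup>2) * P r - g1 (v r)))) has_real_derivative
        - ((P r * Y r / r * (1 - ?a * P r) * Y r + P r * (- x2 (- ln r) / r)) * Q
        + P r * Y r * ((?c * v1 r + 2 * ?a * (?b * v1 r)) * P r
          + (?b + ?a\<^sup>2) * (P r * Y r / r * (1 - ?a * P r)) - ?b * v1 r))) (at r within {0<..R})"
      unfolding Q_def using r
      by (auto intro!: derivative_eq_intros has_real_derivative_comp_v[OF has_deriv_g1 r]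
          has_real_derivative_comp_v[OF has_deriv_g2 r] has_real_derivative_P[OF r]
          has_real_derivative_Y[OF r] simp: field_simps)
  qed (use r first_order_relation in auto)
  moreover have "r * inverse r = 1" using r by simp
  ultimately show ?thesis unfolding v1_def Y_def divide_inverse by algebra
qed

lemma
  assumes r: "r \<in> {0<..R}"
  shows g1_P_le_1: "g1 (v r) * P r \<le> 1"
    and g1_le_P: "g1 (v r) \<le> (g2 (v r) + (g1 (v r))\<^sup>2) * P r"
proof -
  define u where "u = v r"
  have u: "u \<ge> 0" using v_nonneg[OF r] by (simp add: u_def)
  have P: "P r = exp (g u) * Fint g u" using Fint_v[OF r] by (simp add: P_def u_def)
  have "g1 u * exp (g u) * Fint g u \<le> g1 u * exp (g u) * (exp (- g u) / g1 u)"
    using Fint_le[OF u] g1_pos[OF u] by (intro mult_left_mono) auto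
  also have "\<dots> = 1" using g1_pos[OF u] by (simp add: exp_minus)
  finally show "g1 (v r) * P r \<le> 1" by (simp add: P u_def mult.assoc)
  have D: "g2 u + (g1 u)\<^sup>2 > 0" using g1_pos[OF u] g2_nonneg[OF u] by (simp add: add_nonneg_pos)
  have "g1 u = (g2 u + (g1 u)\<^sup>2) * exp (g u) * (g1 u / (g2 u + (g1 u)\<^sup>2) * exp (- g u))"
    using D by (simp add: exp_minus)
  also have "\<dots> \<le> (g2 u + (g1 u)\<^sup>2) * exp (g u) * Fint g u"
    using Fint_ge[OF has_deriv_g2 g1_g3_le u] D by (intro mult_left_mono) auto
  finally show "g1 (v r) \<le> (g2 (v r) + (g1 (v r))\<^sup>2) * P r" by (simp add: P u_def mult.assoc)
qed

lemma supersolution: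
  assumes r: "r \<in> {0<..R}"
  shows "v2 r + (10 - 1) / r * v1 r + exp (g (v r)) \<ge> 0"
proof -
  let ?X = "exp (x (- ln r))"
  have "exp (g (v r)) = 16 * ?X * P r / r\<^sup>2"
    using r by (simp add: P_def Fv_def exp_minus field_simps)
  then have "v2 r + (10 - 1) / r * v1 r + exp (g (v r))
      = P r / r\<^sup>2 * ((Y r)\<^sup>2 * (g1 (v r) * P r - 1) + x2 (- ln r) - 8 * Y r + 16 * ?X)"
    using r by (simp add: v1_def v2_def field_simps power2_eq_square)
  also have "\<dots> \<ge> 0"
  proof (intro mult_nonneg_nonneg supersolution_algebra)
    have "v r \<ge> 0" by (rule v_nonneg[OF r])
    then show "g1 (v r) > 0" "g2 (v r) \<le> (g1 (v r))\<^sup>2" "g1 (v r) * g3 (v r) \<le> 2 * (g2 (v r))\<^sup>2"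
      by (simp_all add: g1_pos g2_le_sq_g1 g1_g3_le)
    show "P r > 0" using r Fv_pos by (simp add: P_def)
    then show "P r / r\<^sup>2 \<ge> 0" by simp
  qed (use r g1_P_le_1 g1_le_P implicit_relation first_order_relation second_order_relation in auto)
  finally show ?thesis .
qed

end

theorem lemma3p5:
  fixes g g1 g2 g3 :: "real \<Rightarrow> real"
    and x x1 x2 :: "real \<Rightarrow> real" and t0 :: real
  assumes g1: "\<And>u. u \<ge> 0 \<Longrightarrow> (g has_real_derivative g1 u) (at u within {0..})"
    and g2: "\<And>u. u \<ge> 0 \<Longrightarrow> (g1 has_real_derivative g2 u) (at u within {0..})"
    and g3: "\<And>u. u \<ge> 0 \<Longrightarrow> (g2 has_real_derivative g3 u) (at u within {0..})"
    and g3_cont: "continuous_on {0..} g3"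
    and g1_pos: "\<And>u. u \<ge> 0 \<Longrightarrow> g1 u > 0"
    and g2_pos: "\<And>u. u \<ge> 0 \<Longrightarrow> g2 u > 0"
    and g12: "\<And>u. u \<ge> 0 \<Longrightarrow> (g1 u)\<^sup>2 - g2 u \<ge> 0"
    and g123: "\<And>u. u \<ge> 0 \<Longrightarrow> 2 * (g2 u)\<^sup>2 - g1 u * g3 u > 0"
    and x1: "\<And>t. t \<ge> t0 \<Longrightarrow> (x has_real_derivative x1 t) (at t within {t0..})"
    and x2: "\<And>t. t \<ge> t0 \<Longrightarrow> (x1 has_real_derivative x2 t) (at t within {t0..})"
    and x2_cont: "continuous_on {t0..} x2"
    and x_eq: "\<And>t. t \<ge> t0 \<Longrightarrow> 4 * (exp (x t) - 1) = hfun g g1 (x t + 2 * t + ln 16)"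
    and x_dom: "\<And>t. t \<ge> t0 \<Longrightarrow> x t + 2 * t + ln 16 \<ge> - ln (Fint g 0)"
    and x_uniq: "\<And>t y. t \<ge> t0 \<Longrightarrow> y + 2 * t + ln 16 \<ge> - ln (Fint g 0) \<Longrightarrow>
                   4 * (exp y - 1) = hfun g g1 (y + 2 * t + ln 16) \<Longrightarrow> y = x t"
    and x_init: "x t0 + 2 * t0 + ln 16 = - ln (Fint g 0)"
    and x_bdd: "\<forall>\<^sub>F t in at_top. \<bar>x t\<bar> \<le> 1"
    and xi_mono: "strict_mono_on {t0..} (\<lambda>t. x t + 2 * t + ln 16)"
  shows "\<exists>v1 v2. \<forall>r \<in> {0<..exp (- t0)}.
           (vfun g x has_real_derivative v1 r) (at r within {0<..exp (- t0)}) \<and>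
           (v1 has_real_derivative v2 r) (at r within {0<..exp (- t0)}) \<and>
           v2 r + (10 - 1) / r * v1 r + exp (g (vfun g x r)) \<ge> 0"
proof -
  interpret radial_profile g g1 g2 g3 x x1 x2 t0
    using g1 g2 g3 g1_pos g2_pos g12 g123 x1 x2 x_eq x_dom
    by unfold_locales (auto simp: less_imp_le)
  show ?thesis
    using has_real_derivative_v has_real_derivative_v1 supersolution by blast
qed

end
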